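(* Let $y_t=\theta_t+Z_t$, $t=1,\dots,n$, where $Z_t$ are independent zero-mean $\sigma$-subgaussian random variables, let $\theta_0=y_0=0$, and let $\delta\in(0,1]$. For $1\le t_h\le t\le n$ define the online-averaging prediction $x_t^{t_h}=y_{t_h-1}$ if $t=t_h$ and $x_t^{t_h}=\bar y_{t_h:t-1}$ if $t>t_h$. Then with probability at least $1-\frac{\delta}{2}$, simultaneously for all $1\le t_h\le t_l\le n$, $$\sum_{t=t_h}^{t_l}(x_t^{t_h}-\theta_t)^2\le 4\sigma^2\log(4n^3/\delta)\big(2+\log(t_l-t_h+1)\big)+2(\theta_{t_h-1}-\theta_{t_h})^2+2\sum_{t=t_h+1}^{t_l}(\bar\theta_{t_h:t-1}-\theta_t)^2.$$
   Context: $\bar y_{a:b}$ and $\bar\theta_{a:b}$ denote the averages of $y_a,\dots,y_b$ and $\theta_a,\dots,\theta_b$ respectively. Logarithms are natural. *)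

theory Defs
  imports "HOL-Probability.Probability"
begin

definition subgaussian :: "'a measure \<Rightarrow> ('a \<Rightarrow> real) \<Rightarrow> real \<Rightarrow> bool" where
  "subgaussian M X \<sigma> \<longleftrightarrow>
     (\<forall>l::real. integrable M (\<lambda>\<omega>. exp (l * X \<omega>)) \<and>
        (\<integral>\<omega>. exp (l * X \<omega>) \<partial>M) \<le> exp (l\<^sup>2 * \<sigma>\<^sup>2 / 2))"

definition avg :: "(nat \<Rightarrow> real) \<Rightarrow> nat \<Rightarrow> nat \<Rightarrow> real" where
  "avg f a b = (\<Sum>i=a..b. f i) / real (b + 1 - a)"

definition obs :: "(nat \<Rightarrow> real) \<Rightarrow> (nat \<Rightarrow> 'a \<Rightarrow> real) \<Rightarrow> 'a \<Rightarrow> nat \<Rightarrow> real" where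
  "obs \<theta> Z \<omega> t = (if t = 0 then 0 else \<theta> t + Z t \<omega>)"

definition pred :: "(nat \<Rightarrow> real) \<Rightarrow> nat \<Rightarrow> nat \<Rightarrow> real" where
  "pred y th t = (if t = th then y (th - 1) else avg y th (t - 1))"

end

theory Submission imports Defs begin

(* Every partial sum of the noise over an interval {a..b} is sqrt (b + 1 - a) * sigma-subgaussian,
   so a Chernoff bound and a union bound over the at most n^2 intervals show that with probability
   at least 1 - delta/2 all of them satisfy (sum)^2 <= 2 (b + 1 - a) sigma^2 L, L = ln (4 n^3 / delta).
   On this event, (u + v)^2 <= 2 u^2 + 2 v^2 splits the error of the online average into the bias of
   the noiseless predictor and the averaged noise; the latter contributes at most 2 sigma^2 L / (t - th)
   at time t, and these terms sum to a harmonic number, which is at most 1 + ln (tl - th + 1). *)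

lemma subgaussian_uminus:
  assumes "subgaussian M X s"
  shows "subgaussian M (\<lambda>\<omega>. - X \<omega>) s"
  unfolding subgaussian_def
proof
  fix l :: real
  show "integrable M (\<lambda>\<omega>. exp (l * - X \<omega>)) \<and> (\<integral>\<omega>. exp (l * - X \<omega>) \<partial>M) \<le> exp (l\<^sup>2 * s\<^sup>2 / 2)"
    using assms[unfolded subgaussian_def, rule_format, of "- l"] by simp
qed

lemma subgaussian_sum_indep:
  assumes "prob_space M" and indep: "prob_space.indep_vars M (\<lambda>_. borel) Z I"
    and "finite I" and sg: "\<And>i. i \<in> I \<Longrightarrow> subgaussian M (Z i) \<sigma>"
  shows "subgaussian M (\<lambda>\<omega>. \<Sum>i\<in>I. Z i \<omega>) (sqrt (real (card I)) * \<sigma>)"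
  unfolding subgaussian_def
proof
  fix l :: real
  interpret prob_space M by fact
  have exp_sum: "exp (l * (\<Sum>i\<in>I. Z i \<omega>)) = (\<Prod>i\<in>I. exp (l * Z i \<omega>))" for \<omega>
    by (simp add: sum_distrib_left exp_sum \<open>finite I\<close>)
  have indep_exp: "indep_vars (\<lambda>_. borel) (\<lambda>i \<omega>. exp (l * Z i \<omega>)) I"
    by (rule indep_vars_compose2[OF indep]) auto
  have int: "\<And>i. i \<in> I \<Longrightarrow> integrable M (\<lambda>\<omega>. exp (l * Z i \<omega>))"
    using sg unfolding subgaussian_def by blast
  have "(\<integral>\<omega>. (\<Prod>i\<in>I. exp (l * Z i \<omega>)) \<partial>M) = (\<Prod>i\<in>I. \<integral>\<omega>. exp (l * Z i \<omega>) \<partial>M)"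
    by (rule indep_vars_lebesgue_integral[OF \<open>finite I\<close> indep_exp int])
  also have "\<dots> \<le> (\<Prod>i\<in>I. exp (l\<^sup>2 * \<sigma>\<^sup>2 / 2))"
    using sg unfolding subgaussian_def by (intro prod_mono) (auto intro: integral_nonneg)
  also have "\<dots> = exp (l\<^sup>2 * (sqrt (real (card I)) * \<sigma>)\<^sup>2 / 2)"
    by (simp add: exp_of_nat_mult[symmetric] power_mult_distrib)
  finally show "integrable M (\<lambda>\<omega>. exp (l * (\<Sum>i\<in>I. Z i \<omega>))) \<and>
      (\<integral>\<omega>. exp (l * (\<Sum>i\<in>I. Z i \<omega>)) \<partial>M) \<le> exp (l\<^sup>2 * (sqrt (real (card I)) * \<sigma>)\<^sup>2 / 2)"
    using indep_vars_integrable[OF \<open>finite I\<close> indep_exp int] by (simp add: exp_sum)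
qed

lemma subgaussian_chernoff:
  assumes "prob_space M" and [measurable]: "S \<in> borel_measurable M"
    and sg: "subgaussian M S s" and "l \<ge> 0"
  shows "measure M {\<omega>\<in>space M. d \<le> S \<omega>} \<le> exp (l\<^sup>2 * s\<^sup>2 / 2 - l * d)"
proof -
  interpret prob_space M by fact
  have mgf: "integrable M (\<lambda>\<omega>. exp (l * S \<omega>))" "(\<integral>\<omega>. exp (l * S \<omega>) \<partial>M) \<le> exp (l\<^sup>2 * s\<^sup>2 / 2)"
    using sg unfolding subgaussian_def by auto
  have "measure M {\<omega>\<in>space M. d \<le> S \<omega>} \<le> measure M {\<omega>\<in>space M. exp (l * d) \<le> exp (l * S \<omega>)}"
    using \<open>l \<ge> 0\<close> by (intro finite_measure_mono) (auto intro: mult_left_mono)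
  also have "\<dots> \<le> (\<integral>\<omega>. exp (l * S \<omega>) \<partial>M) / exp (l * d)"
    using mgf by (intro integral_Markov_inequality_measure[where A="space M"]) auto
  also have "\<dots> \<le> exp (l\<^sup>2 * s\<^sup>2 / 2) / exp (l * d)"
    using mgf by (simp add: divide_right_mono)
  finally show ?thesis by (simp add: exp_diff)
qed

lemma chernoff_exponent_le:
  fixes s d L :: real
  assumes "L \<ge> 0" and d: "sqrt (2 * s\<^sup>2 * L) < d"
  obtains l where "l \<ge> 0" and "l\<^sup>2 * s\<^sup>2 / 2 - l * d \<le> - L"
proof -
  have c: "0 \<le> sqrt (2 * s\<^sup>2 * L)" using \<open>L \<ge> 0\<close> by simp
  with d have "d > 0" by linarith
  show thesis
  proof (cases "s = 0")
    case True
    then show ?thesis using \<open>d > 0\<close> \<open>L \<ge> 0\<close> by (intro that[of "L / d"]) auto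
  next
    case False
    then have s2: "s\<^sup>2 > 0" by simp
    have "(sqrt (2 * s\<^sup>2 * L))\<^sup>2 < d\<^sup>2"
      using d c by (rule power_strict_mono) simp
    then have "2 * s\<^sup>2 * L < d\<^sup>2" using \<open>L \<ge> 0\<close> by simp
    have "(d / s\<^sup>2)\<^sup>2 * s\<^sup>2 / 2 - d / s\<^sup>2 * d = - d\<^sup>2 / (2 * s\<^sup>2)"
      using s2 by (simp add: field_simps power2_eq_square)
    also have "\<dots> \<le> - L" using \<open>2 * s\<^sup>2 * L < d\<^sup>2\<close> s2 by (simp add: field_simps)
    finally show ?thesis using s2 \<open>d > 0\<close> by (intro that[of "d / s\<^sup>2"]) simp_all
  qed
qed

(* The strict threshold lets the case s = 0 through: the bound is obtained as a limit of the
   tails at thresholds strictly above sqrt (2 s^2 L). *)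
lemma subgaussian_tail_gt:
  assumes "prob_space M" and S: "S \<in> borel_measurable M"
    and sg: "subgaussian M S s" and "L \<ge> 0"
  shows "measure M {\<omega>\<in>space M. sqrt (2 * s\<^sup>2 * L) < S \<omega>} \<le> exp (- L)"
proof -
  interpret prob_space M by fact
  let ?c = "sqrt (2 * s\<^sup>2 * L)"
  define A where "A k = {\<omega>\<in>space M. ?c + 1 / real (Suc k) \<le> S \<omega>}" for k
  have "(\<lambda>k. measure M (A k)) \<longlonglongrightarrow> measure M (\<Union>k. A k)"
  proof (rule finite_Lim_measure_incseq)
    show "range A \<subseteq> sets M" unfolding A_def using S by auto
    have "1 / real (Suc n) \<le> 1 / real (Suc m)" if "m \<le> n" for m n
      using that by (simp add: frac_le)
    then show "incseq A" unfolding incseq_def A_def by force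
  qed
  moreover have "(\<Union>k. A k) = {\<omega>\<in>space M. ?c < S \<omega>}"
  proof (intro equalityI subsetI)
    fix x assume "x \<in> (\<Union>k. A k)"
    then show "x \<in> {\<omega>\<in>space M. ?c < S \<omega>}"
      unfolding A_def by (auto intro: less_le_trans[of _ "?c + 1 / real (Suc _)"])
  next
    fix x assume x: "x \<in> {\<omega>\<in>space M. ?c < S \<omega>}"
    then obtain k where "1 / real (Suc k) < S x - ?c"
      using reals_Archimedean[of "S x - ?c"] by (auto simp: inverse_eq_divide)
    then have "?c + 1 / real (Suc k) \<le> S x" by linarith
    then show "x \<in> (\<Union>k. A k)" using x unfolding A_def by blast
  qed
  moreover have "measure M (A k) \<le> exp (- L)" for k
  proof -
    have "?c < ?c + 1 / real (Suc k)" by simp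
    then obtain l where "l \<ge> 0" "l\<^sup>2 * s\<^sup>2 / 2 - l * (?c + 1 / real (Suc k)) \<le> - L"
      by (rule chernoff_exponent_le[OF \<open>L \<ge> 0\<close>])
    then show ?thesis
      unfolding A_def using subgaussian_chernoff[OF \<open>prob_space M\<close> S sg \<open>l \<ge> 0\<close>, of "?c + 1 / real (Suc k)"]
      by (meson exp_le_cancel_iff order_trans)
  qed
  ultimately show ?thesis by (metis LIMSEQ_le_const2)
qed

lemma subgaussian_sq_tail:
  assumes "prob_space M" and S[measurable]: "S \<in> borel_measurable M"
    and sg: "subgaussian M S s" and "L \<ge> 0"
  shows "measure M {\<omega>\<in>space M. 2 * s\<^sup>2 * L < (S \<omega>)\<^sup>2} \<le> 2 * exp (- L)"
proof -
  interpret prob_space M by fact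
  let ?c = "sqrt (2 * s\<^sup>2 * L)"
  have "2 * s\<^sup>2 * L < x\<^sup>2 \<longleftrightarrow> ?c < \<bar>x\<bar>" for x :: real
    by (metis real_sqrt_abs real_sqrt_less_iff)
  moreover have "?c < \<bar>x\<bar> \<longleftrightarrow> ?c < x \<or> ?c < - x" for x :: real
    by linarith
  ultimately have "{\<omega>\<in>space M. 2 * s\<^sup>2 * L < (S \<omega>)\<^sup>2} = {\<omega>\<in>space M. ?c < S \<omega>} \<union> {\<omega>\<in>space M. ?c < - S \<omega>}"
    by blast
  then have "measure M {\<omega>\<in>space M. 2 * s\<^sup>2 * L < (S \<omega>)\<^sup>2}
      \<le> measure M {\<omega>\<in>space M. ?c < S \<omega>} + measure M {\<omega>\<in>space M. ?c < - S \<omega>}"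
    by (simp add: measure_Un_le)
  also have "\<dots> \<le> exp (- L) + exp (- L)"
    using subgaussian_tail_gt[OF \<open>prob_space M\<close> S sg \<open>L \<ge> 0\<close>]
      subgaussian_tail_gt[OF \<open>prob_space M\<close> _ subgaussian_uminus[OF sg] \<open>L \<ge> 0\<close>]
    by (intro add_mono) auto
  finally show ?thesis by simp
qed

lemma interval_sums_concentrated:
  assumes "prob_space M" and indep: "prob_space.indep_vars M (\<lambda>_. borel) Z {1..n}"
    and sg: "\<And>t. t \<in> {1..n} \<Longrightarrow> subgaussian M (Z t) \<sigma>" and "L \<ge> 0"
  defines "B \<equiv> {\<omega>\<in>space M. \<exists>a b. 1 \<le> a \<and> a \<le> b \<and> b \<le> n \<and>
                  2 * real (b + 1 - a) * \<sigma>\<^sup>2 * L < (\<Sum>i=a..b. Z i \<omega>)\<^sup>2}"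
  shows "B \<in> sets M" and "measure M B \<le> 2 * real n ^ 2 * exp (- L)"
proof -
  interpret prob_space M by fact
  define Pairs where "Pairs = {(a, b). 1 \<le> a \<and> a \<le> b \<and> b \<le> n}"
  define Bad where "Bad a b = {\<omega>\<in>space M. 2 * real (b + 1 - a) * \<sigma>\<^sup>2 * L < (\<Sum>i=a..b. Z i \<omega>)\<^sup>2}" for a b
  have Pairs_sub: "Pairs \<subseteq> {1..n} \<times> {1..n}" unfolding Pairs_def by auto
  then have "finite Pairs" by (rule finite_subset) simp
  have "card Pairs \<le> n * n"
    using card_mono[OF _ Pairs_sub] by (simp add: card_cartesian_product)
  have B_eq: "B = (\<Union>(a, b)\<in>Pairs. Bad a b)" unfolding B_def Bad_def Pairs_def by auto
  have Bad: "Bad a b \<in> sets M \<and> measure M (Bad a b) \<le> 2 * exp (- L)" if "(a, b) \<in> Pairs" for a b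
  proof -
    have sub: "{a..b} \<subseteq> {1..n}" using that unfolding Pairs_def by auto
    have "Z i \<in> borel_measurable M" if "i \<in> {a..b}" for i
      using indep sub that unfolding indep_vars_def by auto
    then have S[measurable]: "(\<lambda>\<omega>. \<Sum>i\<in>{a..b}. Z i \<omega>) \<in> borel_measurable M"
      by (rule borel_measurable_sum)
    have "subgaussian M (\<lambda>\<omega>. \<Sum>i\<in>{a..b}. Z i \<omega>) (sqrt (real (card {a..b})) * \<sigma>)"
      using sub by (intro subgaussian_sum_indep[OF \<open>prob_space M\<close> indep_vars_subset[OF indep sub]]) (auto intro: sg)
    from subgaussian_sq_tail[OF \<open>prob_space M\<close> S this \<open>L \<ge> 0\<close>]
    have "measure M (Bad a b) \<le> 2 * exp (- L)"
      unfolding Bad_def by (simp add: power_mult_distrib mult.assoc)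
    moreover have "Bad a b \<in> sets M" unfolding Bad_def by measurable
    ultimately show ?thesis by simp
  qed
  show "B \<in> sets M" unfolding B_eq using \<open>finite Pairs\<close> Bad by auto
  have "measure M B \<le> (\<Sum>p\<in>Pairs. measure M (case_prod Bad p))"
    unfolding B_eq using \<open>finite Pairs\<close> Bad by (intro measure_UNION_le) auto
  also have "\<dots> \<le> (\<Sum>p\<in>Pairs. 2 * exp (- L))"
    using Bad by (intro sum_mono) auto
  also have "\<dots> = real (card Pairs) * (2 * exp (- L))" by simp
  also have "\<dots> \<le> real (n * n) * (2 * exp (- L))"
    using \<open>card Pairs \<le> n * n\<close> by (intro mult_right_mono) (simp_all only: of_nat_le_iff, simp)
  finally show "measure M B \<le> 2 * real n ^ 2 * exp (- L)" by (simp add: power2_eq_square)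
qed

lemma avg_add: "avg (\<lambda>i. f i + g i) a b = avg f a b + avg g a b"
  by (simp add: avg_def sum.distrib add_divide_distrib)

lemma pred_add: "pred (\<lambda>i. f i + g i) th t = pred f th t + pred g th t"
  by (simp add: pred_def avg_add)

lemma sum_sq_add_le:
  fixes f g :: "'a \<Rightarrow> real"
  shows "(\<Sum>i\<in>A. (f i + g i)\<^sup>2) \<le> 2 * (\<Sum>i\<in>A. (f i)\<^sup>2) + 2 * (\<Sum>i\<in>A. (g i)\<^sup>2)"
proof -
  have "(f i + g i)\<^sup>2 \<le> 2 * (f i)\<^sup>2 + 2 * (g i)\<^sup>2" for i
    using zero_le_power2[of "f i - g i"] by (simp add: power2_eq_square algebra_simps)
  then have "(\<Sum>i\<in>A. (f i + g i)\<^sup>2) \<le> (\<Sum>i\<in>A. 2 * (f i)\<^sup>2 + 2 * (g i)\<^sup>2)"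
    by (rule sum_mono)
  then show ?thesis by (simp add: sum.distrib sum_distrib_left)
qed

lemma harm_le_one_plus_ln: "harm m \<le> 1 + ln (real m)"
proof (cases m)
  case (Suc k)
  have "harm (Suc k) - ln (real (Suc k)) \<le> harm (Suc 0) - ln (real (Suc 0))"
    using decseq_harm_diff_ln unfolding decseq_def by blast
  then show ?thesis using Suc by (simp add: harm_def)
qed (simp add: harm_def)

lemma sum_inverse_shifted_eq_harm: "(\<Sum>t=th+1..th+m. 1 / real (t - th)) = harm m"
  by (induction m) (simp_all add: harm_def inverse_eq_divide)

lemma pred_bias_sq_sum:
  fixes th tl :: nat
  assumes "th \<le> tl"
  shows "(\<Sum>t=th..tl. (pred \<theta> th t - \<theta> t)\<^sup>2)
       = (\<theta> (th - 1) - \<theta> th)\<^sup>2 + (\<Sum>t=th+1..tl. (avg \<theta> th (t - 1) - \<theta> t)\<^sup>2)"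
  using assms by (simp add: sum.atLeast_Suc_atMost pred_def)

lemma pred_noise_sq_sum_le:
  fixes z :: "nat \<Rightarrow> real" and th tl :: nat
  assumes conc: "\<And>a b. 1 \<le> a \<Longrightarrow> a \<le> b \<Longrightarrow> b \<le> n \<Longrightarrow> (\<Sum>i=a..b. z i)\<^sup>2 \<le> 2 * real (b + 1 - a) * K"
    and "z 0 = 0" and "K \<ge> 0" and "1 \<le> th" and "th \<le> tl" and "tl \<le> n"
  shows "(\<Sum>t=th..tl. (pred z th t)\<^sup>2) \<le> 2 * K * (2 + ln (real (tl - th + 1)))"
proof -
  have first: "(pred z th th)\<^sup>2 \<le> 2 * K"
  proof (cases "th = 1")
    case True
    then show ?thesis using \<open>z 0 = 0\<close> \<open>K \<ge> 0\<close> by (simp add: pred_def)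
  next
    case False
    then show ?thesis using conc[of "th - 1" "th - 1"] assms by (simp add: pred_def)
  qed
  have later: "(pred z th t)\<^sup>2 \<le> 2 * K * (1 / real (t - th))" if t: "t \<in> {th+1..tl}" for t
  proof -
    define S where "S = (\<Sum>i=th..t-1. z i)"
    define m where "m = real (t - th)"
    have "m > 0" using t unfolding m_def by auto
    have "pred z th t = S / m"
      using t unfolding pred_def avg_def S_def m_def by (auto simp: Suc_diff_le)
    moreover have "S\<^sup>2 \<le> 2 * m * K"
      using conc[of th "t - 1"] t assms unfolding S_def m_def by auto
    then have "(S / m)\<^sup>2 \<le> 2 * K * (1 / m)"
      using \<open>m > 0\<close> by (simp add: power_divide field_simps power2_eq_square)
    ultimately show ?thesis unfolding m_def by simp
  qed
  have "(\<Sum>t=th..tl. (pred z th t)\<^sup>2) = (pred z th th)\<^sup>2 + (\<Sum>t=th+1..tl. (pred z th t)\<^sup>2)"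
    using \<open>th \<le> tl\<close> by (simp add: sum.atLeast_Suc_atMost)
  also have "\<dots> \<le> 2 * K + (\<Sum>t=th+1..tl. 2 * K * (1 / real (t - th)))"
    using first later by (intro add_mono sum_mono) auto
  also have "\<dots> = 2 * K * (1 + harm (tl - th))"
  proof -
    have "(\<Sum>t=th+1..tl. 1 / real (t - th)) = harm (tl - th)"
      using sum_inverse_shifted_eq_harm[of th "tl - th"] \<open>th \<le> tl\<close> by simp
    then show ?thesis by (subst sum_distrib_left[symmetric]) (simp add: algebra_simps)
  qed
  also have "\<dots> \<le> 2 * K * (2 + ln (real (tl - th + 1)))"
  proof -
    have "ln (real (tl - th)) \<le> ln (real (tl - th + 1))" using \<open>th \<le> tl\<close> by (cases "tl = th") (auto intro: ln_mono)
    then show ?thesis using harm_le_one_plus_ln[of "tl - th"] \<open>K \<ge> 0\<close> by (intro mult_left_mono) auto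
  qed
  finally show ?thesis .
qed

lemma pred_risk_le:
  fixes z \<theta> :: "nat \<Rightarrow> real" and th tl :: nat
  assumes "\<And>a b. 1 \<le> a \<Longrightarrow> a \<le> b \<Longrightarrow> b \<le> n \<Longrightarrow> (\<Sum>i=a..b. z i)\<^sup>2 \<le> 2 * real (b + 1 - a) * K"
    and "z 0 = 0" and "K \<ge> 0" and "1 \<le> th" and "th \<le> tl" and "tl \<le> n"
  shows "(\<Sum>t=th..tl. (pred (\<lambda>t. \<theta> t + z t) th t - \<theta> t)\<^sup>2)
      \<le> 4 * K * (2 + ln (real (tl - th + 1))) + 2 * (\<theta> (th - 1) - \<theta> th)\<^sup>2
        + 2 * (\<Sum>t=th+1..tl. (avg \<theta> th (t - 1) - \<theta> t)\<^sup>2)"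
proof -
  have "(\<Sum>t=th..tl. (pred (\<lambda>t. \<theta> t + z t) th t - \<theta> t)\<^sup>2)
      = (\<Sum>t=th..tl. ((pred \<theta> th t - \<theta> t) + pred z th t)\<^sup>2)"
    by (simp add: pred_add algebra_simps)
  also have "\<dots> \<le> 2 * (\<Sum>t=th..tl. (pred \<theta> th t - \<theta> t)\<^sup>2) + 2 * (\<Sum>t=th..tl. (pred z th t)\<^sup>2)"
    by (rule sum_sq_add_le)
  also have "\<dots> \<le> 2 * (\<Sum>t=th..tl. (pred \<theta> th t - \<theta> t)\<^sup>2) + 4 * K * (2 + ln (real (tl - th + 1)))"
    using pred_noise_sq_sum_le[OF assms] by simp
  finally show ?thesis using pred_bias_sq_sum[OF \<open>th \<le> tl\<close>, of \<theta>] by simp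
qed

lemma pred_obs_risk_le:
  fixes \<theta> :: "nat \<Rightarrow> real" and th tl :: nat
  assumes conc: "\<And>a b. 1 \<le> a \<Longrightarrow> a \<le> b \<Longrightarrow> b \<le> n \<Longrightarrow> (\<Sum>i=a..b. Z i \<omega>)\<^sup>2 \<le> 2 * real (b + 1 - a) * K"
    and "\<theta> 0 = 0" and "K \<ge> 0" and "1 \<le> th" and "th \<le> tl" and "tl \<le> n"
  shows "(\<Sum>t=th..tl. (pred (obs \<theta> Z \<omega>) th t - \<theta> t)\<^sup>2)
      \<le> 4 * K * (2 + ln (real (tl - th + 1))) + 2 * (\<theta> (th - 1) - \<theta> th)\<^sup>2
        + 2 * (\<Sum>t=th+1..tl. (avg \<theta> th (t - 1) - \<theta> t)\<^sup>2)"
proof -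
  define z where "z t = (if t = 0 then 0 else Z t \<omega>)" for t
  have "obs \<theta> Z \<omega> = (\<lambda>t. \<theta> t + z t)"
    using \<open>\<theta> 0 = 0\<close> by (auto simp: obs_def z_def)
  moreover have "(\<Sum>i=a..b. z i) = (\<Sum>i=a..b. Z i \<omega>)" if "1 \<le> a" for a b
    using that unfolding z_def by (intro sum.cong) auto
  ultimately show ?thesis
    using pred_risk_le[of n z K th tl \<theta>] conc assms(3-) by (simp add: z_def)
qed

lemma pred_obs_measurable:
  assumes Z: "\<And>i. i \<in> {1..n} \<Longrightarrow> Z i \<in> borel_measurable M" and "t \<le> n"
  shows "(\<lambda>\<omega>. pred (obs \<theta> Z \<omega>) th t) \<in> borel_measurable M"
proof -
  have obs: "(\<lambda>\<omega>. obs \<theta> Z \<omega> i) \<in> borel_measurable M" if "i \<le> n" for i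
    using Z that by (cases "i = 0") (auto simp: obs_def)
  have "(\<lambda>\<omega>. \<Sum>i=th..t-1. obs \<theta> Z \<omega> i) \<in> borel_measurable M"
    using \<open>t \<le> n\<close> by (intro borel_measurable_sum obs) auto
  then show ?thesis
    using obs[of "th - 1"] \<open>t \<le> n\<close> unfolding pred_def avg_def by (cases "t = th") auto
qed

lemma pred_risk_event_sets:
  assumes "\<And>i. i \<in> {1..n} \<Longrightarrow> Z i \<in> borel_measurable M"
  shows "{\<omega>\<in>space M. \<forall>th tl. 1 \<le> th \<and> th \<le> tl \<and> tl \<le> n \<longrightarrow>
           (\<Sum>t=th..tl. (pred (obs \<theta> Z \<omega>) th t - \<theta> t)\<^sup>2) \<le> R th tl} \<in> sets M"
proof -
  have "{\<omega>\<in>space M. \<forall>th tl. 1 \<le> th \<and> th \<le> tl \<and> tl \<le> n \<longrightarrow>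
           (\<Sum>t=th..tl. (pred (obs \<theta> Z \<omega>) th t - \<theta> t)\<^sup>2) \<le> R th tl}
      = {\<omega>\<in>space M. \<forall>p\<in>{1..n} \<times> {1..n}. fst p \<le> snd p \<longrightarrow>
           (\<Sum>t=fst p..snd p. (pred (obs \<theta> Z \<omega>) (fst p) t - \<theta> t)\<^sup>2) \<le> R (fst p) (snd p)}"
    by auto
  also have "\<dots> \<in> sets M"
  proof (intro sets.sets_Collect_finite_All)
    fix p assume p: "p \<in> {1..n} \<times> {1..n}"
    have "(\<lambda>\<omega>. \<Sum>t=fst p..snd p. (pred (obs \<theta> Z \<omega>) (fst p) t - \<theta> t)\<^sup>2) \<in> borel_measurable M"
      using p by (intro borel_measurable_sum borel_measurable_power borel_measurable_diff
          pred_obs_measurable[OF assms]) auto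
    then show "{\<omega>\<in>space M. fst p \<le> snd p \<longrightarrow>
        (\<Sum>t=fst p..snd p. (pred (obs \<theta> Z \<omega>) (fst p) t - \<theta> t)\<^sup>2) \<le> R (fst p) (snd p)} \<in> sets M"
      by measurable
  qed simp
  finally show ?thesis .
qed

lemma ln_confidence:
  fixes \<delta> :: real
  assumes "0 < \<delta>" and "\<delta> \<le> 1"
  shows "0 \<le> ln (4 * real n ^ 3 / \<delta>)"
    and "2 * real n ^ 2 * exp (- ln (4 * real n ^ 3 / \<delta>)) \<le> \<delta> / 2"
proof -
  show "0 \<le> ln (4 * real n ^ 3 / \<delta>)"
  proof (cases "n = 0")
    case False
    then have "1 \<le> real n ^ 3" by simp
    then show ?thesis using assms by (simp add: field_simps)
  qed simp
  show "2 * real n ^ 2 * exp (- ln (4 * real n ^ 3 / \<delta>)) \<le> \<delta> / 2"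
  proof (cases "n = 0")
    case False
    then have "2 * real n ^ 2 * exp (- ln (4 * real n ^ 3 / \<delta>)) = \<delta> / (2 * real n)"
      using assms by (simp add: exp_minus power2_eq_square power3_eq_cube field_simps)
    also have "\<dots> \<le> \<delta> / 2" using False assms by (intro divide_left_mono) auto
    finally show ?thesis .
  qed (use assms in simp)
qed

theorem lemma7:
  fixes M :: "'a measure" and Z :: "nat \<Rightarrow> 'a \<Rightarrow> real" and \<theta> :: "nat \<Rightarrow> real"
    and \<sigma> \<delta> :: real and n :: nat
  assumes "prob_space M"
    and "prob_space.indep_vars M (\<lambda>_. borel) Z {1..n}"
    and "\<And>t. t \<in> {1..n} \<Longrightarrow> integrable M (Z t) \<and> (\<integral>\<omega>. Z t \<omega> \<partial>M) = 0"
    and "\<And>t. t \<in> {1..n} \<Longrightarrow> subgaussian M (Z t) \<sigma>"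
    and "\<theta> 0 = 0"
    and "0 < \<delta>" and "\<delta> \<le> 1"
  shows "measure M {\<omega> \<in> space M. \<forall>th tl. 1 \<le> th \<and> th \<le> tl \<and> tl \<le> n \<longrightarrow>
            (\<Sum>t=th..tl. (pred (obs \<theta> Z \<omega>) th t - \<theta> t)\<^sup>2)
            \<le> 4 * \<sigma>\<^sup>2 * ln (4 * real n ^ 3 / \<delta>) * (2 + ln (real (tl - th + 1)))
              + 2 * (\<theta> (th - 1) - \<theta> th)\<^sup>2
              + 2 * (\<Sum>t=th+1..tl. (avg \<theta> th (t - 1) - \<theta> t)\<^sup>2)}
         \<ge> 1 - \<delta> / 2" (is "measure M ?T \<ge> _")
proof -
  interpret prob_space M by fact
  define L where "L = ln (4 * real n ^ 3 / \<delta>)"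
  have "L \<ge> 0" unfolding L_def using ln_confidence assms(6,7) by blast
  define B where "B = {\<omega>\<in>space M. \<exists>a b. 1 \<le> a \<and> a \<le> b \<and> b \<le> n \<and>
                  2 * real (b + 1 - a) * \<sigma>\<^sup>2 * L < (\<Sum>i=a..b. Z i \<omega>)\<^sup>2}"
  have "B \<in> sets M"
    unfolding B_def by (rule interval_sums_concentrated(1)[OF assms(1,2,4) \<open>L \<ge> 0\<close>])
  have "measure M B \<le> 2 * real n ^ 2 * exp (- L)"
    unfolding B_def by (rule interval_sums_concentrated(2)[OF assms(1,2,4) \<open>L \<ge> 0\<close>])
  also have "\<dots> \<le> \<delta> / 2"
    unfolding L_def by (rule ln_confidence(2)[OF assms(6,7)])
  finally have "measure M B \<le> \<delta> / 2" .
  have "space M - B \<subseteq> ?T"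
  proof safe
    fix \<omega> th tl assume \<omega>: "\<omega> \<in> space M" "\<omega> \<notin> B" and "1 \<le> th" "th \<le> tl" "tl \<le> n"
    have "(\<Sum>i=a..b. Z i \<omega>)\<^sup>2 \<le> 2 * real (b + 1 - a) * (\<sigma>\<^sup>2 * L)"
      if "1 \<le> a" "a \<le> b" "b \<le> n" for a b
      using \<omega> that unfolding B_def mult.assoc by (blast intro: leI)
    moreover have "0 \<le> \<sigma>\<^sup>2 * L" using \<open>L \<ge> 0\<close> by simp
    ultimately have "(\<Sum>t=th..tl. (pred (obs \<theta> Z \<omega>) th t - \<theta> t)\<^sup>2)
        \<le> 4 * (\<sigma>\<^sup>2 * L) * (2 + ln (real (tl - th + 1))) + 2 * (\<theta> (th - 1) - \<theta> th)\<^sup>2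
          + 2 * (\<Sum>t=th+1..tl. (avg \<theta> th (t - 1) - \<theta> t)\<^sup>2)"
      using pred_obs_risk_le[where Z = Z and \<omega> = \<omega>] assms(5) \<open>1 \<le> th\<close> \<open>th \<le> tl\<close> \<open>tl \<le> n\<close>
      by blast
    then
    show "(\<Sum>t=th..tl. (pred (obs \<theta> Z \<omega>) th t - \<theta> t)\<^sup>2)
        \<le> 4 * \<sigma>\<^sup>2 * ln (4 * real n ^ 3 / \<delta>) * (2 + ln (real (tl - th + 1)))
          + 2 * (\<theta> (th - 1) - \<theta> th)\<^sup>2 + 2 * (\<Sum>t=th+1..tl. (avg \<theta> th (t - 1) - \<theta> t)\<^sup>2)"
      unfolding L_def by (simp only: mult.assoc)
  qed
  moreover have "?T \<in> sets M"
    using assms(2) unfolding indep_vars_def by (intro pred_risk_event_sets) auto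
  ultimately have "measure M (space M - B) \<le> measure M ?T" by (rule finite_measure_mono)
  then show ?thesis using \<open>B \<in> sets M\<close> \<open>measure M B \<le> \<delta> / 2\<close> prob_compl by simp
qed

end
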